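(* Let $\Gamma=(G,\sigma)$ be a connected signed graph on $n$ vertices, let $M$ be any real symmetric $n\times n$ matrix compatible with $\Gamma$, let $\lambda_n$ be the largest eigenvalue of $M$, and let $f_n$ be an eigenfunction of $M$ for $\lambda_n$. Then $\Gamma$ is antibalanced if and only if $\mathfrak{W}(f_n)=\mathfrak{S}(f_n)=n$. Moreover, when $\Gamma$ is antibalanced, $\lambda_n$ is simple.
   Context: Graphs are finite, simple, undirected. A signed graph $\Gamma=(G,\sigma)$ is a graph $G=(V,E)$ with $\sigma:E\to\{+1,-1\}$. It is antibalanced if every odd cycle has negative sign and every even cycle positive sign (sign of a cycle = product of signs of its edges). The induced signed graph of a real symmetric $n\times n$ matrix $M$ has vertices $x_1,\dots,x_n$, edge $\{x_i,x_j\}$ iff $i\neq j$ and $M_{ij}\ne0$, with sign $-M_{ij}/|M_{ij}|$; $M$ is compatible with $\Gamma$ if its induced signed graph is $\Gamma$. Eigenfunctions are nonzero eigenvectors, viewed as functions on $V$. A walk is $y_1,\dots,y_m$ ($m\ge2$) with consecutive vertices adjacent. For $f:V\to\mathbb R$, $\Omega=\{x:f(x)\ne0\}$. S-walk: $f(y_j)\sigma_{y_jy_{j+1}}f(y_{j+1})>0$ for all $j$. W-walk: for any two consecutive nonzeros $y_i,y_j$ ($i<j$, $f(y_l)=0$ for $i<l<j$), $f(y_i)\sigma_{y_iy_{i+1}}\cdots\sigma_{y_{j-1}y_j}f(y_j)>0$. $\mathfrak{S}(f)$ is the number of equivalence classes on $\Omega$ of the relation "$x=y$ or an S-walk connects $x$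 and $y$" (the strong nodal domains), and $\mathfrak{W}(f)$ is the number of classes of "$x=y$ or a W-walk connects $x$ and $y$" (the weak nodal domains). *)

theory Defs
  imports "HOL-Analysis.Analysis"
begin

text \<open>Signed graphs on the vertex set UNIV of a finite type 'n.
  E is the (symmetric, irreflexive) adjacency relation, sigma gives the sign (+1 or -1)
  of each edge, as a real number.\<close>

definition signed_graph :: "('n \<Rightarrow> 'n \<Rightarrow> bool) \<Rightarrow> ('n \<Rightarrow> 'n \<Rightarrow> real) \<Rightarrow> bool" where
  "signed_graph E \<sigma> \<longleftrightarrow>
     (\<forall>x. \<not> E x x) \<and> (\<forall>x y. E x y \<longrightarrow> E y x) \<and>
     (\<forall>x y. E x y \<longrightarrow> \<sigma> x y = \<sigma> y x \<and> (\<sigma> x y = 1 \<or> \<sigma> x y = -1))"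

definition is_walk :: "('n \<Rightarrow> 'n \<Rightarrow> bool) \<Rightarrow> 'n list \<Rightarrow> bool" where
  "is_walk E ys \<longleftrightarrow> length ys \<ge> 2 \<and> (\<forall>j. Suc j < length ys \<longrightarrow> E (ys!j) (ys!Suc j))"

definition connected_graph :: "('n \<Rightarrow> 'n \<Rightarrow> bool) \<Rightarrow> bool" where
  "connected_graph E \<longleftrightarrow>
     (\<forall>x y. x \<noteq> y \<longrightarrow> (\<exists>ys. is_walk E ys \<and> hd ys = x \<and> last ys = y))"

definition is_cycle :: "('n \<Rightarrow> 'n \<Rightarrow> bool) \<Rightarrow> 'n list \<Rightarrow> bool" where
  "is_cycle E cs \<longleftrightarrow> length cs \<ge> 3 \<and> distinct cs \<and>
     (\<forall>j. Suc j < length cs \<longrightarrow> E (cs!j) (cs!Suc j)) \<and> E (last cs) (hd cs)"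

definition cycle_sign :: "('n \<Rightarrow> 'n \<Rightarrow> real) \<Rightarrow> 'n list \<Rightarrow> real" where
  "cycle_sign \<sigma> cs =
     (\<Prod>j<length cs. \<sigma> (cs!j) (cs!((Suc j) mod length cs)))"

definition antibalanced :: "('n \<Rightarrow> 'n \<Rightarrow> bool) \<Rightarrow> ('n \<Rightarrow> 'n \<Rightarrow> real) \<Rightarrow> bool" where
  "antibalanced E \<sigma> \<longleftrightarrow>
     (\<forall>cs. is_cycle E cs \<longrightarrow>
        (odd (length cs) \<longrightarrow> cycle_sign \<sigma> cs < 0) \<and>
        (even (length cs) \<longrightarrow> cycle_sign \<sigma> cs > 0))"

definition compatible :: "real^'n^'n \<Rightarrow> ('n \<Rightarrow> 'n \<Rightarrow> bool) \<Rightarrow> ('n \<Rightarrow> 'n \<Rightarrow> real) \<Rightarrow> bool" where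
  "compatible M E \<sigma> \<longleftrightarrow>
     (\<forall>i j. E i j \<longleftrightarrow> (i \<noteq> j \<and> M$i$j \<noteq> 0)) \<and>
     (\<forall>i j. E i j \<longrightarrow> \<sigma> i j = - (M$i$j / \<bar>M$i$j\<bar>))"

definition is_eigenvalue :: "real^'n^'n \<Rightarrow> real \<Rightarrow> bool" where
  "is_eigenvalue M lam \<longleftrightarrow> (\<exists>v. v \<noteq> 0 \<and> M *v v = lam *\<^sub>R v)"

definition largest_eigenvalue :: "real^'n^'n \<Rightarrow> real \<Rightarrow> bool" where
  "largest_eigenvalue M lam \<longleftrightarrow> is_eigenvalue M lam \<and> (\<forall>mu. is_eigenvalue M mu \<longrightarrow> mu \<le> lam)"

definition is_eigenfunction :: "real^'n^'n \<Rightarrow> real \<Rightarrow> real^'n \<Rightarrow> bool" where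
  "is_eigenfunction M lam f \<longleftrightarrow> f \<noteq> 0 \<and> M *v f = lam *\<^sub>R f"

text \<open>Simple eigenvalue: for the (symmetric) matrices considered, multiplicity one,
  i.e. the eigenspace is one-dimensional.\<close>
definition simple_eigenvalue :: "real^'n^'n \<Rightarrow> real \<Rightarrow> bool" where
  "simple_eigenvalue M lam \<longleftrightarrow> dim {v. M *v v = lam *\<^sub>R v} = 1"

definition S_walk :: "('n \<Rightarrow> 'n \<Rightarrow> bool) \<Rightarrow> ('n \<Rightarrow> 'n \<Rightarrow> real) \<Rightarrow> real^'n \<Rightarrow> 'n list \<Rightarrow> bool" where
  "S_walk E \<sigma> f ys \<longleftrightarrow> is_walk E ys \<and>
     (\<forall>j. Suc j < length ys \<longrightarrow> f$(ys!j) * \<sigma> (ys!j) (ys!Suc j) * f$(ys!Suc j) > 0)"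

definition W_walk :: "('n \<Rightarrow> 'n \<Rightarrow> bool) \<Rightarrow> ('n \<Rightarrow> 'n \<Rightarrow> real) \<Rightarrow> real^'n \<Rightarrow> 'n list \<Rightarrow> bool" where
  "W_walk E \<sigma> f ys \<longleftrightarrow> is_walk E ys \<and>
     (\<forall>i j. i < j \<and> j < length ys \<and> f$(ys!i) \<noteq> 0 \<and> f$(ys!j) \<noteq> 0 \<and>
            (\<forall>l. i < l \<and> l < j \<longrightarrow> f$(ys!l) = 0) \<longrightarrow>
            f$(ys!i) * (\<Prod>k\<in>{i..<j}. \<sigma> (ys!k) (ys!Suc k)) * f$(ys!j) > 0)"

definition nonzero_set :: "real^'n \<Rightarrow> 'n set" where
  "nonzero_set f = {x. f$x \<noteq> 0}"

definition strong_rel :: "('n \<Rightarrow> 'n \<Rightarrow> bool) \<Rightarrow> ('n \<Rightarrow> 'n \<Rightarrow> real) \<Rightarrow> real^'n \<Rightarrow> ('n \<times> 'n) set" where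
  "strong_rel E \<sigma> f = {(x, y). x \<in> nonzero_set f \<and> y \<in> nonzero_set f \<and>
      (x = y \<or> (\<exists>ys. S_walk E \<sigma> f ys \<and> hd ys = x \<and> last ys = y))}"

definition weak_rel :: "('n \<Rightarrow> 'n \<Rightarrow> bool) \<Rightarrow> ('n \<Rightarrow> 'n \<Rightarrow> real) \<Rightarrow> real^'n \<Rightarrow> ('n \<times> 'n) set" where
  "weak_rel E \<sigma> f = {(x, y). x \<in> nonzero_set f \<and> y \<in> nonzero_set f \<and>
      (x = y \<or> (\<exists>ys. W_walk E \<sigma> f ys \<and> hd ys = x \<and> last ys = y))}"

definition strong_nodal_count :: "('n \<Rightarrow> 'n \<Rightarrow> bool) \<Rightarrow> ('n \<Rightarrow> 'n \<Rightarrow> real) \<Rightarrow> real^'n \<Rightarrow> nat" where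
  "strong_nodal_count E \<sigma> f = card (nonzero_set f // strong_rel E \<sigma> f)"

definition weak_nodal_count :: "('n \<Rightarrow> 'n \<Rightarrow> bool) \<Rightarrow> ('n \<Rightarrow> 'n \<Rightarrow> real) \<Rightarrow> real^'n \<Rightarrow> nat" where
  "weak_nodal_count E \<sigma> f = card (nonzero_set f // weak_rel E \<sigma> f)"

end

theory Submission
  imports Defs
begin

text \<open>A signature \<open>\<sigma>\<close> on a connected graph is antibalanced iff \<open>\<sigma> x y = - t x * t y\<close> for
  some \<open>t :: V \<Rightarrow> {1, -1}\<close>: with respect to \<open>-\<sigma>\<close> every closed walk is positive (split it at a
  repeated vertex until it is a cycle), so \<open>t x\<close> can be taken to be the \<open>-\<sigma>\<close>-sign of any walk
  from a fixed root to \<open>x\<close>. Conjugating \<open>M\<close> by \<open>diag t\<close> makes its off-diagonal entries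
  nonnegative, and the Perron-Frobenius argument applies: if \<open>v\<close> is an eigenvector for the
  largest eigenvalue, then so is \<open>t |v|\<close>, whose Rayleigh quotient is no smaller. Equality forces
  \<open>v x * \<sigma> x y * v y < 0\<close> on every edge, and the eigenvalue equation of \<open>t |v|\<close> propagates
  zeros of \<open>v\<close> along edges, so \<open>v\<close> vanishes nowhere. Hence every vertex is a weak and a strong
  nodal domain on its own, and the top eigenspace is one-dimensional, as none of its nonzero
  elements vanishes at a fixed vertex. Conversely, \<open>n\<close> strong nodal domains force \<open>f\<close> to vanish
  nowhere and to change sign relative to \<open>\<sigma>\<close> across every edge, so \<open>t = sgn \<circ> f\<close> exhibits
  \<open>\<sigma>\<close> as antibalanced.\<close>

section \<open>Walks and their signs\<close>

lemma successively_append_overlap: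
  "successively P (xs @ a # ys) \<longleftrightarrow> successively P (xs @ [a]) \<and> successively P (a # ys)"
  by (cases "xs = []") (auto simp: successively_append_iff)

lemma signed_graph_sign_sym:
  "signed_graph E \<sigma> \<Longrightarrow> E x y \<Longrightarrow> \<sigma> y x = \<sigma> x y"
  unfolding signed_graph_def by metis

lemma signed_graph_abs_sign:
  "signed_graph E \<sigma> \<Longrightarrow> E x y \<Longrightarrow> \<bar>\<sigma> x y\<bar> = 1"
  unfolding signed_graph_def by (metis abs_1 abs_minus)

lemma is_walk_iff: "is_walk E ys \<longleftrightarrow> 2 \<le> length ys \<and> successively E ys"
  by (auto simp: is_walk_def successively_conv_nth)

lemma is_cycle_iff:
  "is_cycle E cs \<longleftrightarrow> 3 \<le> length cs \<and> distinct cs \<and> successively E (cs @ [hd cs])"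
proof (cases "cs = []")
  case False
  then have "successively E (cs @ [hd cs]) \<longleftrightarrow> successively E cs \<and> E (last cs) (hd cs)"
    by (simp add: successively_append_iff)
  then show ?thesis
    by (auto simp: is_cycle_def successively_conv_nth)
qed (simp add: is_cycle_def)

fun walk_sign :: "('a \<Rightarrow> 'a \<Rightarrow> real) \<Rightarrow> 'a list \<Rightarrow> real" where
  "walk_sign \<tau> (x # y # ys) = \<tau> x y * walk_sign \<tau> (y # ys)"
| "walk_sign \<tau> _ = 1"

lemma walk_sign_append:
  "walk_sign \<tau> (xs @ a # ys) = walk_sign \<tau> (xs @ [a]) * walk_sign \<tau> (a # ys)"
proof (induction xs)
  case Nil
  then show ?case by (cases ys) auto
next
  case (Cons x xs)
  then show ?case by (cases xs) auto
qed

lemma walk_sign_append_edge: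
  "xs \<noteq> [] \<Longrightarrow> ys \<noteq> [] \<Longrightarrow>
    walk_sign \<tau> (xs @ ys) = walk_sign \<tau> xs * \<tau> (last xs) (hd ys) * walk_sign \<tau> ys"
  by (induction \<tau> xs rule: walk_sign.induct) (auto simp: neq_Nil_conv)

lemma walk_sign_conv_prod:
  "walk_sign \<tau> xs = (\<Prod>j < length xs - 1. \<tau> (xs ! j) (xs ! Suc j))"
  by (induction \<tau> xs rule: walk_sign.induct)
    (simp_all add: prod.lessThan_Suc_shift del: prod.lessThan_Suc)

lemma walk_sign_uminus:
  "walk_sign (\<lambda>x y. - \<tau> x y) xs = (-1) ^ (length xs - 1) * walk_sign \<tau> xs"
  by (induction \<tau> xs rule: walk_sign.induct) simp_all

lemma walk_sign_rev:
  assumes "\<forall>x y. E x y \<longrightarrow> \<tau> x y = \<tau> y x" and "successively E xs"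
  shows "walk_sign \<tau> (rev xs) = walk_sign \<tau> xs"
  using assms(2)
proof (induction xs rule: induct_list012)
  case (3 x y ys)
  have "walk_sign \<tau> (rev (x # y # ys)) = walk_sign \<tau> (rev (y # ys)) * \<tau> y x"
    using walk_sign_append[of \<tau> "rev ys" y "[x]"] by simp
  moreover have "\<tau> y x = \<tau> x y"
    using "3.prems" assms(1) by (metis successively.simps(3))
  ultimately show ?case
    using 3 by simp
qed simp_all

lemma walk_sign_abs:
  assumes "\<forall>x y. E x y \<longrightarrow> \<bar>\<tau> x y\<bar> = 1" and "successively E xs"
  shows "\<bar>walk_sign \<tau> xs\<bar> = 1"
  using assms(2) by (induction xs rule: induct_list012) (simp_all add: abs_mult assms(1))

lemma walk_sign_switching:
  assumes "\<forall>x y. E x y \<longrightarrow> \<tau> x y = t x * t y" and "\<forall>x. \<bar>t x\<bar> = 1"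
    and "successively E xs" and "xs \<noteq> []"
  shows "walk_sign \<tau> xs = t (hd xs) * t (last xs)"
  using assms(3,4)
proof (induction xs rule: induct_list012)
  case (2 x)
  then show ?case
    using assms(2) abs_mult_self_eq[of "t x"] by simp
next
  case (3 x y ys)
  have "walk_sign \<tau> (x # y # ys) = t x * (t y * t y) * t (last (y # ys))"
    using 3 assms(1) by simp
  also have "t y * t y = 1"
    using assms(2) abs_mult_self_eq[of "t y"] by simp
  finally show ?case by simp
qed simp

lemma cycle_sign_eq_walk_sign:
  assumes "cs \<noteq> []"
  shows "cycle_sign \<sigma> cs = walk_sign \<sigma> (cs @ [hd cs])"
proof -
  have "(cs @ [hd cs]) ! Suc j = cs ! (Suc j mod length cs)" if "j < length cs" for j
    using that assms by (cases "Suc j = length cs") (auto simp: nth_append hd_conv_nth)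
  then show ?thesis
    unfolding cycle_sign_def walk_sign_conv_prod by (intro prod.cong) (auto simp: nth_append)
qed

section \<open>Antibalanced signatures are switchings\<close>

lemma switching_imp_antibalanced:
  assumes "\<forall>x y. E x y \<longrightarrow> \<sigma> x y = - t x * t y" and "\<forall>x. \<bar>t x\<bar> = 1"
  shows "antibalanced E \<sigma>"
  unfolding antibalanced_def
proof (intro allI impI)
  fix cs assume "is_cycle E cs"
  then have ne: "cs \<noteq> []" and walk: "successively E (cs @ [hd cs])"
    by (auto simp: is_cycle_iff)
  have "walk_sign (\<lambda>x y. - \<sigma> x y) (cs @ [hd cs]) = t (hd cs) * t (hd cs)"
    using walk_sign_switching[of E _ t, OF _ assms(2) walk] assms(1) ne by simp
  then have "(-1) ^ length cs * cycle_sign \<sigma> cs = 1"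
    using ne assms(2) abs_mult_self_eq[of "t (hd cs)"]
    by (simp add: walk_sign_uminus cycle_sign_eq_walk_sign)
  then have "cycle_sign \<sigma> cs = (-1) ^ length cs"
    by (metis minus_one_mult_self mult.left_commute mult.right_neutral)
  then show "(odd (length cs) \<longrightarrow> cycle_sign \<sigma> cs < 0) \<and>
      (even (length cs) \<longrightarrow> 0 < cycle_sign \<sigma> cs)"
    by simp
qed

lemma antibalanced_cycle_sign:
  assumes sg: "signed_graph E \<sigma>" and ab: "antibalanced E \<sigma>" and cyc: "is_cycle E cs"
  shows "cycle_sign \<sigma> cs = (-1) ^ length cs"
proof -
  have "cs \<noteq> []"
    using cyc by (auto simp: is_cycle_def)
  then have "\<bar>cycle_sign \<sigma> cs\<bar> = 1"
    using cyc walk_sign_abs[of E \<sigma> "cs @ [hd cs]"] signed_graph_abs_sign[OF sg]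
    by (auto simp: is_cycle_iff cycle_sign_eq_walk_sign)
  moreover have "odd (length cs) \<Longrightarrow> cycle_sign \<sigma> cs < 0" "even (length cs) \<Longrightarrow> cycle_sign \<sigma> cs > 0"
    using ab cyc by (auto simp: antibalanced_def)
  ultimately show ?thesis
    by (cases "even (length cs)") (auto simp: abs_if split: if_splits)
qed

lemma closed_walk_split:
  assumes walk: "successively E ws" and "ws \<noteq> []" and closed: "hd ws = last ws"
    and "\<not> distinct (butlast ws)"
  obtains W1 W2 where "successively E W1" "W1 \<noteq> []" "hd W1 = last W1" "length W1 < length ws"
    and "successively E W2" "W2 \<noteq> []" "hd W2 = last W2" "length W2 < length ws"
    and "\<And>\<tau>. walk_sign \<tau> ws = walk_sign \<tau> W1 * walk_sign \<tau> W2"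
proof -
  obtain A c B C' where split: "butlast ws = A @ [c] @ B @ [c] @ C'"
    using assms(4) not_distinct_decomp by blast
  define C where "C = C' @ [last ws]"
  have "ws = butlast ws @ [last ws]"
    using \<open>ws \<noteq> []\<close> by simp
  also have "\<dots> = A @ c # B @ c # C"
    unfolding split C_def by simp
  finally have ws: "ws = A @ c # B @ c # C" .
  have "C \<noteq> []" "last C = last ws"
    unfolding C_def by simp_all
  have "hd (A @ c # C) = hd ws"
    unfolding ws by (cases A) simp_all
  then have "hd (A @ c # C) = last (A @ c # C)"
    using closed \<open>C \<noteq> []\<close> \<open>last C = last ws\<close> by simp
  moreover have "successively E (A @ c # C)" "successively E (c # B @ [c])"
    using walk successively_append_overlap[of E A c "B @ c # C"]
      successively_append_overlap[of E "c # B" c C] successively_append_overlap[of E A c C]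
    unfolding ws by simp_all
  moreover have "length (A @ c # C) < length ws" "length (c # B @ [c]) < length ws"
    using \<open>C \<noteq> []\<close> unfolding ws by auto
  moreover have "walk_sign \<tau> ws = walk_sign \<tau> (A @ c # C) * walk_sign \<tau> (c # B @ [c])" for \<tau>
    using walk_sign_append[of \<tau> A c "B @ c # C"] walk_sign_append[of \<tau> "c # B" c C]
      walk_sign_append[of \<tau> A c C]
    unfolding ws by simp
  ultimately show ?thesis
    using that by simp
qed

lemma closed_walk_is_cycle:
  assumes walk: "successively E ws" and closed: "hd ws = last ws"
    and "distinct (butlast ws)" and "3 < length ws"
  shows "is_cycle E (butlast ws)" and "ws = butlast ws @ [hd (butlast ws)]"
proof -
  have "butlast ws \<noteq> []"
    using \<open>3 < length ws\<close> by (cases ws rule: rev_cases) auto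
  then have snoc: "butlast ws @ [last ws] = ws"
    by (intro append_butlast_last_id) auto
  have "ws = butlast ws @ [last ws]"
    using snoc by simp
  also have "last ws = hd (butlast ws)"
    using hd_append2[OF \<open>butlast ws \<noteq> []\<close>, of "[last ws]"] closed unfolding snoc by simp
  finally show ws: "ws = butlast ws @ [hd (butlast ws)]" .
  show "is_cycle E (butlast ws)"
    using assms(3,4) walk unfolding is_cycle_iff by (subst (asm) ws) simp
qed

lemma short_closed_walk_sign:
  assumes sg: "signed_graph E \<sigma>" and walk: "successively E ws" and "ws \<noteq> []"
    and closed: "hd ws = last ws" and "length ws \<le> 3"
  shows "walk_sign (\<lambda>x y. - \<sigma> x y) ws = 1"
proof -
  consider a where "ws = [a]" | a b where "ws = [a, b]" | a b c where "ws = [a, b, c]"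
    using \<open>ws \<noteq> []\<close> \<open>length ws \<le> 3\<close> by (cases ws; cases "tl ws"; cases "tl (tl ws)") auto
  then show ?thesis
  proof cases
    case (2 a b)
    then show ?thesis
      using walk closed sg by (simp add: signed_graph_def)
  next
    case (3 a b c)
    then have "E a b" "a = c"
      using walk closed by simp_all
    then show ?thesis
      using 3 signed_graph_sign_sym[OF sg \<open>E a b\<close>] signed_graph_abs_sign[OF sg \<open>E a b\<close>]
        abs_mult_self_eq[of "\<sigma> a b"]
      by simp
  qed simp
qed

lemma antibalanced_closed_walk_sign:
  assumes sg: "signed_graph E \<sigma>" and ab: "antibalanced E \<sigma>"
  shows "successively E ws \<Longrightarrow> ws \<noteq> [] \<Longrightarrow> hd ws = last ws \<Longrightarrow>
    walk_sign (\<lambda>x y. - \<sigma> x y) ws = 1"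
proof (induction "length ws" arbitrary: ws rule: less_induct)
  case less
  consider "\<not> distinct (butlast ws)" | "length ws \<le> 3" | "distinct (butlast ws)" "3 < length ws"
    by linarith
  then show ?case
  proof cases
    case 1
    obtain W1 W2 where W1: "successively E W1" "W1 \<noteq> []" "hd W1 = last W1" "length W1 < length ws"
      and W2: "successively E W2" "W2 \<noteq> []" "hd W2 = last W2" "length W2 < length ws"
      and "\<And>\<tau>. walk_sign \<tau> ws = walk_sign \<tau> W1 * walk_sign \<tau> W2"
      using closed_walk_split[OF less.prems 1] by blast
    then show ?thesis
      using less.hyps[OF W1(4) W1(1-3)] less.hyps[OF W2(4) W2(1-3)] by simp
  next
    case 2
    then show ?thesis
      using short_closed_walk_sign[OF sg] less.prems by blast
  next
    case 3
    let ?cs = "butlast ws"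
    have "?cs \<noteq> []"
      using 3 by (cases ws rule: rev_cases) auto
    have "walk_sign \<sigma> ws = (-1) ^ length ?cs"
      using closed_walk_is_cycle[OF less.prems(1,3) 3] antibalanced_cycle_sign[OF sg ab]
        cycle_sign_eq_walk_sign[OF \<open>?cs \<noteq> []\<close>]
      by metis
    then show ?thesis
      using \<open>?cs \<noteq> []\<close> by (simp add: walk_sign_uminus flip: power_mult_distrib)
  qed
qed

lemma connected_graph_walk:
  assumes "connected_graph E"
  obtains p where "successively E p" "p \<noteq> []" "hd p = x" "last p = y"
proof (cases "x = y")
  case True
  then show ?thesis
    using that[of "[x]"] by simp
next
  case False
  then obtain p where "successively E p" "2 \<le> length p" "hd p = x" "last p = y"
    using assms by (auto simp: connected_graph_def is_walk_iff)
  moreover have "p \<noteq> []"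
    using \<open>2 \<le> length p\<close> by (cases p) auto
  ultimately show ?thesis
    using that by blast
qed

lemma connected_graph_propagate:
  assumes "connected_graph E" and "P x" and step: "\<And>a b. E a b \<Longrightarrow> P a \<Longrightarrow> P b"
  shows "P y"
proof -
  obtain p where "successively E p" "p \<noteq> []" "hd p = x" "last p = y"
    by (rule connected_graph_walk[OF assms(1)])
  moreover have "P (last p)" if "successively E p" "p \<noteq> []" "P (hd p)" for p
    using that by (induction p rule: induct_list012) (auto dest: step)
  ultimately show ?thesis
    using assms(2) by blast
qed

text \<open>\<open>t x\<close> is the sign of a fixed walk from a root \<open>r\<close> to \<open>x\<close>; for an edge \<open>x y\<close>, the closed
  walk from \<open>r\<close> to \<open>x\<close>, across the edge and back to \<open>r\<close> forces \<open>\<tau> x y = t x * t y\<close>.\<close>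
lemma closed_walk_sign_imp_switching:
  assumes con: "connected_graph E" and symE: "\<forall>x y. E x y \<longrightarrow> E y x"
    and sym: "\<forall>x y. E x y \<longrightarrow> \<tau> x y = \<tau> y x" and unit: "\<forall>x y. E x y \<longrightarrow> \<bar>\<tau> x y\<bar> = 1"
    and closed: "\<And>ws. successively E ws \<Longrightarrow> ws \<noteq> [] \<Longrightarrow> hd ws = last ws \<Longrightarrow> walk_sign \<tau> ws = 1"
  obtains t where "\<forall>x. \<bar>t x\<bar> = 1" and "\<forall>x y. E x y \<longrightarrow> \<tau> x y = t x * t y"
proof -
  obtain r :: 'a where True by blast
  define P where "P x = (SOME p. successively E p \<and> p \<noteq> [] \<and> hd p = r \<and> last p = x)" for x
  have P: "successively E (P x) \<and> P x \<noteq> [] \<and> hd (P x) = r \<and> last (P x) = x" for x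
    unfolding P_def by (rule someI_ex) (rule connected_graph_walk[OF con], blast)
  define t where "t x = walk_sign \<tau> (P x)" for x
  have t_unit: "\<bar>t x\<bar> = 1" for x
    unfolding t_def using walk_sign_abs[OF unit] P by blast
  have "\<tau> x y = t x * t y" if "E x y" for x y
  proof -
    let ?W = "P x @ rev (P y)"
    have "successively E (rev (P y))"
      using successively_mono[OF P[of y, THEN conjunct1], of "\<lambda>a b. E b a"] symE by simp
    then have "successively E ?W"
      using P[of x] P[of y] that by (simp add: successively_append_iff hd_rev)
    moreover have "hd ?W = last ?W"
      using P[of x] P[of y] by (simp add: last_rev)
    ultimately have "walk_sign \<tau> ?W = 1"
      using closed P[of x] by simp
    moreover have "walk_sign \<tau> ?W = t x * \<tau> x y * t y"
      using walk_sign_append_edge[of "P x" "rev (P y)" \<tau>] P[of x] P[of y]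
        walk_sign_rev[OF sym P[THEN conjunct1], of y]
      unfolding t_def by (simp add: hd_rev)
    ultimately have closed_xy: "t x * \<tau> x y * t y = 1"
      by simp
    have "\<tau> x y = (t x * t x) * (t y * t y) * \<tau> x y"
      using abs_mult_self_eq[of "t x"] abs_mult_self_eq[of "t y"] t_unit[of x] t_unit[of y]
      by simp
    also have "\<dots> = (t x * \<tau> x y * t y) * (t x * t y)"
      by (simp add: ac_simps)
    finally show ?thesis
      using closed_xy by simp
  qed
  then show ?thesis
    using that t_unit by blast
qed

lemma antibalanced_switching:
  assumes sg: "signed_graph E \<sigma>" and con: "connected_graph E" and ab: "antibalanced E \<sigma>"
  obtains t where "\<forall>x. \<bar>t x\<bar> = 1" and "\<forall>x y. E x y \<longrightarrow> \<sigma> x y = - t x * t y"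
proof -
  have "\<forall>x y. E x y \<longrightarrow> E y x" "\<forall>x y. E x y \<longrightarrow> - \<sigma> x y = - \<sigma> y x"
      "\<forall>x y. E x y \<longrightarrow> \<bar>- \<sigma> x y\<bar> = 1"
    using sg signed_graph_abs_sign[OF sg] by (auto simp: signed_graph_def)
  then obtain t where "\<forall>x. \<bar>t x\<bar> = 1" and neg: "\<forall>x y. E x y \<longrightarrow> - \<sigma> x y = t x * t y"
    using closed_walk_sign_imp_switching[of E "\<lambda>x y. - \<sigma> x y", OF con]
      antibalanced_closed_walk_sign[OF sg ab]
    by blast
  moreover have "\<forall>x y. E x y \<longrightarrow> \<sigma> x y = - t x * t y"
    using neg by (metis minus_minus mult_minus_left)
  ultimately show ?thesis
    using that by blast
qed

section \<open>Rayleigh quotients and top eigenvectors\<close>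

lemma symmetric_matrix_inner_commute:
  fixes M :: "real^'n^'n"
  assumes "transpose M = M"
  shows "x \<bullet> (M *v y) = y \<bullet> (M *v x)"
  by (metis assms dot_lmul_matrix inner_commute transpose_matrix_vector)

lemma inner_matrix_vector_mult_sum:
  fixes M :: "real^'n^'n"
  shows "x \<bullet> (M *v y) = (\<Sum>i\<in>UNIV. \<Sum>j\<in>UNIV. x$i * M$i$j * y$j)"
  by (simp add: inner_vec_def matrix_vector_mult_def sum_distrib_left mult.assoc)

text \<open>Otherwise moving from \<open>u\<close> a little in the direction \<open>w = M u - \<mu> u\<close> would exceed the
  bound: the excess at \<open>u + s w\<close> is \<open>s * (2 * a + s * c)\<close> with \<open>a = w \<bullet> w > 0\<close> and \<open>c \<le> 0\<close>.\<close>
lemma rayleigh_max_imp_eigenvector: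
  fixes M :: "real^'n^'n"
  assumes sym: "transpose M = M"
    and bound: "\<And>x. x \<bullet> (M *v x) \<le> \<mu> * (x \<bullet> x)"
    and attained: "u \<bullet> (M *v u) = \<mu> * (u \<bullet> u)"
  shows "M *v u = \<mu> *\<^sub>R u"
proof -
  define w where "w = M *v u - \<mu> *\<^sub>R u"
  define a where "a = w \<bullet> w"
  define c where "c = w \<bullet> (M *v w) - \<mu> * (w \<bullet> w)"
  have "c \<le> 0"
    using bound[of w] unfolding c_def by simp
  have expand: "(u + s *\<^sub>R w) \<bullet> (M *v (u + s *\<^sub>R w)) - \<mu> * ((u + s *\<^sub>R w) \<bullet> (u + s *\<^sub>R w))
      = s * (2 * a + s * c)" for s
  proof -
    have a_alt: "a = w \<bullet> (M *v u) - \<mu> * (w \<bullet> u)"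
      unfolding a_def by (subst (2) w_def) (simp add: inner_diff_right)
    show ?thesis
      unfolding c_def a_alt
      using attained symmetric_matrix_inner_commute[OF sym, of u w]
      by (simp add: inner_add_left inner_add_right matrix_vector_right_distrib
          matrix_vector_mult_scaleR algebra_simps power2_eq_square inner_commute[of w u])
  qed
  have "a = 0"
  proof (rule ccontr)
    assume "a \<noteq> 0"
    then have "a > 0"
      unfolding a_def by simp
    define s where "s = a / (1 - c)"
    have "s > 0" and "2 * a + s * c > 0"
      unfolding s_def using \<open>a > 0\<close> \<open>c \<le> 0\<close> by (simp_all add: field_simps)
    then have "s * (2 * a + s * c) > 0"
      by simp
    then show False
      using bound[of "u + s *\<^sub>R w"] expand[of s] by simp
  qed
  then show ?thesis
    unfolding a_def w_def by simp
qed

lemma largest_eigenvalue_rayleigh_bound: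
  fixes M :: "real^'n^'n"
  assumes sym: "transpose M = M" and lg: "largest_eigenvalue M lam"
  shows "x \<bullet> (M *v x) \<le> lam * (x \<bullet> x)"
proof -
  have "compact (sphere (0::real^'n) 1)" and "sphere (0::real^'n) 1 \<noteq> {}"
    by simp_all
  moreover have "continuous_on (sphere 0 1) (\<lambda>x. x \<bullet> (M *v x))"
    by (intro continuous_intros)
  ultimately obtain u where u: "u \<in> sphere 0 1"
    and u_max: "\<forall>y\<in>sphere 0 1. y \<bullet> (M *v y) \<le> u \<bullet> (M *v u)"
    using continuous_attains_sup by blast
  define \<mu> where "\<mu> = u \<bullet> (M *v u)"
  have bound: "y \<bullet> (M *v y) \<le> \<mu> * (y \<bullet> y)" for y
  proof (cases "y = 0")
    case False
    define z where "z = (1 / norm y) *\<^sub>R y"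
    have "z \<in> sphere 0 1"
      using False unfolding z_def by simp
    then have "z \<bullet> (M *v z) \<le> \<mu>"
      using u_max unfolding \<mu>_def by blast
    moreover have "z \<bullet> (M *v z) = (y \<bullet> (M *v y)) / (y \<bullet> y)"
      unfolding z_def using False
      by (simp add: matrix_vector_mult_scaleR dot_square_norm power2_eq_square)
    ultimately show ?thesis
      using False by (simp add: divide_le_eq mult.commute)
  qed simp
  have "M *v u = \<mu> *\<^sub>R u"
    using u by (intro rayleigh_max_imp_eigenvector[OF sym bound]) (simp add: \<mu>_def dot_square_norm)
  moreover have "u \<noteq> 0"
    using u by auto
  ultimately have "\<mu> \<le> lam"
    using lg unfolding largest_eigenvalue_def is_eigenvalue_def by blast
  then show ?thesis
    using bound[of x] by (meson inner_ge_zero mult_right_mono order_trans)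
qed

lemma switched_abs_inner:
  fixes M :: "real^'n^'n" and v :: "real^'n"
  assumes t_unit: "\<And>i. \<bar>t i\<bar> = 1"
  shows "(\<chi> i. t i * \<bar>v$i\<bar>) \<bullet> (M *v (\<chi> i. t i * \<bar>v$i\<bar>)) - v \<bullet> (M *v v) =
      (\<Sum>i\<in>UNIV. \<Sum>j\<in>UNIV. t i * t j * M$i$j * (\<bar>v$i\<bar> * \<bar>v$j\<bar> - t i * t j * v$i * v$j))"
    and "(\<chi> i. t i * \<bar>v$i\<bar>) \<bullet> (\<chi> i. t i * \<bar>v$i\<bar>) = v \<bullet> v"
proof -
  have tt: "t i * t i = 1" for i
    using abs_mult_self_eq[of "t i"] t_unit[of i] by simp
  have "(t i * \<bar>v$i\<bar>) * M$i$j * (t j * \<bar>v$j\<bar>) - v$i * M$i$j * v$j =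
      t i * t j * M$i$j * (\<bar>v$i\<bar> * \<bar>v$j\<bar> - t i * t j * v$i * v$j)" for i j
  proof -
    have "v$i * M$i$j * v$j = (t i * t i) * (t j * t j) * (v$i * M$i$j * v$j)"
      using tt by simp
    then show ?thesis
      by (simp add: algebra_simps)
  qed
  then show "(\<chi> i. t i * \<bar>v$i\<bar>) \<bullet> (M *v (\<chi> i. t i * \<bar>v$i\<bar>)) - v \<bullet> (M *v v) =
      (\<Sum>i\<in>UNIV. \<Sum>j\<in>UNIV. t i * t j * M$i$j * (\<bar>v$i\<bar> * \<bar>v$j\<bar> - t i * t j * v$i * v$j))"
    unfolding inner_matrix_vector_mult_sum by (simp flip: sum_subtractf)
  show "(\<chi> i. t i * \<bar>v$i\<bar>) \<bullet> (\<chi> i. t i * \<bar>v$i\<bar>) = v \<bullet> v"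
    unfolding inner_vec_def
    using tt by (intro sum.cong) (simp_all add: abs_mult_self_eq algebra_simps)
qed

lemma switched_gap_nonneg:
  fixes M :: "real^'n^'n" and v :: "real^'n"
  assumes t_unit: "\<And>i. \<bar>t i\<bar> = 1" and off_diag: "\<And>i j. i \<noteq> j \<Longrightarrow> 0 \<le> t i * t j * M$i$j"
  shows "0 \<le> t i * t j * M$i$j * (\<bar>v$i\<bar> * \<bar>v$j\<bar> - t i * t j * v$i * v$j)"
proof (cases "i = j")
  case True
  have "t i * t i = 1"
    using abs_mult_self_eq[of "t i"] t_unit[of i] by simp
  then show ?thesis
    using True by (simp add: abs_mult_self_eq ac_simps)
next
  case False
  have "t i * t j * v$i * v$j \<le> \<bar>t i * t j * v$i * v$j\<bar>"
    by simp
  also have "\<dots> = \<bar>v$i\<bar> * \<bar>v$j\<bar>"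
    using t_unit[of i] t_unit[of j] by (simp add: abs_mult)
  finally show ?thesis
    using off_diag[OF False] by simp
qed

text \<open>After switching by \<open>t\<close> the off-diagonal entries of \<open>M\<close> are nonnegative, so \<open>t |v|\<close> has
  Rayleigh quotient at least that of \<open>v\<close>; as \<open>lam\<close> bounds it, every summand of the difference
  vanishes.\<close>
lemma switched_abs_eigenvector:
  fixes M :: "real^'n^'n" and v :: "real^'n"
  assumes sym: "transpose M = M" and bound: "\<And>x. x \<bullet> (M *v x) \<le> lam * (x \<bullet> x)"
    and t_unit: "\<And>i. \<bar>t i\<bar> = 1" and off_diag: "\<And>i j. i \<noteq> j \<Longrightarrow> 0 \<le> t i * t j * M$i$j"
    and v: "M *v v = lam *\<^sub>R v"
  shows "M *v (\<chi> i. t i * \<bar>v$i\<bar>) = lam *\<^sub>R (\<chi> i. t i * \<bar>v$i\<bar>)"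
    and "M$i$j \<noteq> 0 \<Longrightarrow> t i * t j * v$i * v$j = \<bar>v$i\<bar> * \<bar>v$j\<bar>"
proof -
  define h where "h = (\<chi> i. t i * \<bar>v$i\<bar>)"
  define gap where "gap i j = t i * t j * M$i$j * (\<bar>v$i\<bar> * \<bar>v$j\<bar> - t i * t j * v$i * v$j)"
    for i j
  have gap_nonneg: "0 \<le> gap i j" for i j
    unfolding gap_def by (rule switched_gap_nonneg[OF t_unit off_diag])
  have gap_sum: "h \<bullet> (M *v h) - v \<bullet> (M *v v) = (\<Sum>i\<in>UNIV. \<Sum>j\<in>UNIV. gap i j)"
    unfolding h_def gap_def by (rule switched_abs_inner(1)[OF t_unit])
  have "h \<bullet> h = v \<bullet> v"
    unfolding h_def by (rule switched_abs_inner(2)[OF t_unit])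
  then have "h \<bullet> (M *v h) \<le> v \<bullet> (M *v v)"
    using bound[of h] v by simp
  then have "(\<Sum>i\<in>UNIV. \<Sum>j\<in>UNIV. gap i j) \<le> 0"
    using gap_sum by simp
  moreover have "0 \<le> (\<Sum>i\<in>UNIV. \<Sum>j\<in>UNIV. gap i j)"
    using gap_nonneg by (intro sum_nonneg)
  ultimately have "(\<Sum>i\<in>UNIV. \<Sum>j\<in>UNIV. gap i j) = 0"
    by linarith
  then have gap_zero: "gap i j = 0" for i j
    using gap_nonneg by (simp add: sum_nonneg sum_nonneg_eq_0_iff)
  show "M *v h = lam *\<^sub>R h"
  proof (rule rayleigh_max_imp_eigenvector[OF sym bound])
    show "h \<bullet> (M *v h) = lam * (h \<bullet> h)"
      using gap_sum gap_zero \<open>h \<bullet> h = v \<bullet> v\<close> v by simp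
  qed
  show "t i * t j * v$i * v$j = \<bar>v$i\<bar> * \<bar>v$j\<bar>" if "M$i$j \<noteq> 0"
    using gap_zero[of i j] that t_unit[of i] t_unit[of j] unfolding gap_def by auto
qed

text \<open>At a zero \<open>a\<close> of \<open>v\<close>, row \<open>a\<close> of the eigenvalue equation for \<open>t |v|\<close> (multiplied by
  \<open>t a\<close>) is a sum of nonnegative terms, so the zero spreads to the neighbours of \<open>a\<close>.\<close>
lemma switched_top_eigenvector_nowhere_zero:
  fixes M :: "real^'n^'n" and v :: "real^'n"
  assumes sym: "transpose M = M" and bound: "\<And>x. x \<bullet> (M *v x) \<le> lam * (x \<bullet> x)"
    and t_unit: "\<And>i. \<bar>t i\<bar> = 1" and off_diag: "\<And>i j. i \<noteq> j \<Longrightarrow> 0 \<le> t i * t j * M$i$j"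
    and con: "connected_graph E" and edge: "\<And>i j. E i j \<Longrightarrow> M$i$j \<noteq> 0"
    and v: "M *v v = lam *\<^sub>R v" and "v \<noteq> 0"
  shows "v$x \<noteq> 0"
proof
  have h: "M *v (\<chi> i. t i * \<bar>v$i\<bar>) = lam *\<^sub>R (\<chi> i. t i * \<bar>v$i\<bar>)"
    by (rule switched_abs_eigenvector(1)[OF sym bound t_unit off_diag v])
  have zero_step: "v$b = 0" if "E a b" and "v$a = 0" for a b
  proof -
    have "t a * (M *v (\<chi> i. t i * \<bar>v$i\<bar>))$a = 0"
      using h \<open>v$a = 0\<close> by simp
    then have "(\<Sum>j\<in>UNIV. t a * t j * M$a$j * \<bar>v$j\<bar>) = 0"
      by (simp add: matrix_vector_mult_def sum_distrib_left ac_simps)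
    moreover have "0 \<le> t a * t j * M$a$j * \<bar>v$j\<bar>" for j
      using off_diag[of a j] \<open>v$a = 0\<close> by (cases "a = j") simp_all
    ultimately have "\<forall>j\<in>UNIV. t a * t j * M$a$j * \<bar>v$j\<bar> = 0"
      using sum_nonneg_eq_0_iff[of UNIV "\<lambda>j. t a * t j * M$a$j * \<bar>v$j\<bar>"] by simp
    then have "t a * t b * M$a$b * \<bar>v$b\<bar> = 0"
      by blast
    then show ?thesis
      using edge[OF \<open>E a b\<close>] t_unit[of a] t_unit[of b] by auto
  qed
  assume "v$x = 0"
  then have "v$y = 0" for y
    using connected_graph_propagate[OF con, of "\<lambda>z. v$z = 0"] zero_step by blast
  then show False
    using \<open>v \<noteq> 0\<close> by (simp add: vec_eq_iff)
qed

section \<open>Nodal domains of top eigenvectors\<close>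

lemma compatible_switching_off_diag_nonneg:
  fixes M :: "real^'n^'n"
  assumes comp: "compatible M E \<sigma>" and switch: "\<And>x y. E x y \<Longrightarrow> \<sigma> x y = - t x * t y"
    and "i \<noteq> j"
  shows "0 \<le> t i * t j * M$i$j"
proof (cases "E i j")
  case True
  then have "M$i$j \<noteq> 0" and "t i * t j = M$i$j / \<bar>M$i$j\<bar>"
    using comp switch[OF True] by (simp_all add: compatible_def)
  then have "t i * t j * M$i$j = \<bar>M$i$j\<bar>"
    by (simp add: field_simps abs_mult_self_eq)
  then show ?thesis
    by simp
next
  case False
  then show ?thesis
    using comp \<open>i \<noteq> j\<close> by (simp add: compatible_def)
qed

definition sign_alternating :: "('n \<Rightarrow> 'n \<Rightarrow> bool) \<Rightarrow> ('n \<Rightarrow> 'n \<Rightarrow> real) \<Rightarrow> real^'n \<Rightarrow> bool" where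
  "sign_alternating E \<sigma> f \<longleftrightarrow> (\<forall>x. f$x \<noteq> 0) \<and> (\<forall>x y. E x y \<longrightarrow> f$x * \<sigma> x y * f$y < 0)"

lemma antibalanced_top_eigenvector_sign_alternating:
  fixes M :: "real^'n^'n"
  assumes sg: "signed_graph E \<sigma>" and con: "connected_graph E"
    and sym: "transpose M = M" and comp: "compatible M E \<sigma>"
    and lg: "largest_eigenvalue M lam" and ab: "antibalanced E \<sigma>"
    and ev: "is_eigenfunction M lam v"
  shows "sign_alternating E \<sigma> v"
proof -
  obtain t where t_unit: "\<And>x. \<bar>t x\<bar> = 1" and switch: "\<And>x y. E x y \<Longrightarrow> \<sigma> x y = - t x * t y"
    using antibalanced_switching[OF sg con ab] by blast
  have edge: "M$i$j \<noteq> 0" if "E i j" for i j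
    using comp that by (simp add: compatible_def)
  have off_diag: "0 \<le> t i * t j * M$i$j" if "i \<noteq> j" for i j
    using compatible_switching_off_diag_nonneg[OF comp switch that] .
  have v: "M *v v = lam *\<^sub>R v" "v \<noteq> 0"
    using ev by (simp_all add: is_eigenfunction_def)
  note bound = largest_eigenvalue_rayleigh_bound[OF sym lg]
  have abs_product: "t i * t j * v$i * v$j = \<bar>v$i\<bar> * \<bar>v$j\<bar>" if "M$i$j \<noteq> 0" for i j
    using off_diag by (rule switched_abs_eigenvector(2)[OF sym bound t_unit _ v(1) that])
  have nowhere_zero: "v$x \<noteq> 0" for x
    using off_diag edge by (rule switched_top_eigenvector_nowhere_zero[OF sym bound t_unit _ con _ v])
  have "v$x * \<sigma> x y * v$y < 0" if "E x y" for x y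
  proof -
    have "v$x * \<sigma> x y * v$y = - (t x * t y * v$x * v$y)"
      using switch that by simp
    also have "\<dots> = - (\<bar>v$x\<bar> * \<bar>v$y\<bar>)"
      using abs_product[OF edge[OF that]] by simp
    also have "\<dots> < 0"
      using nowhere_zero by simp
    finally show ?thesis .
  qed
  then show ?thesis
    using nowhere_zero by (simp add: sign_alternating_def)
qed

lemma sign_alternating_imp_antibalanced:
  assumes sg: "signed_graph E \<sigma>" and alt: "sign_alternating E \<sigma> f"
  shows "antibalanced E \<sigma>"
proof (rule switching_imp_antibalanced)
  show "\<forall>x. \<bar>sgn (f$x)\<bar> = 1"
    using alt by (simp add: sign_alternating_def abs_sgn)
  show "\<forall>x y. E x y \<longrightarrow> \<sigma> x y = - sgn (f$x) * sgn (f$y)"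
  proof (intro allI impI)
    fix x y assume "E x y"
    have "sgn (\<sigma> x y) = \<sigma> x y"
      using signed_graph_abs_sign[OF sg \<open>E x y\<close>] by (auto simp: sgn_if abs_if split: if_splits)
    moreover have "sgn (f$x * \<sigma> x y * f$y) = -1"
      using alt \<open>E x y\<close> by (simp add: sign_alternating_def)
    ultimately have edge_sign: "sgn (f$x) * \<sigma> x y * sgn (f$y) = -1"
      by (simp add: sgn_mult)
    have "\<sigma> x y = (sgn (f$x) * sgn (f$x)) * (sgn (f$y) * sgn (f$y)) * \<sigma> x y"
      using alt by (simp add: sign_alternating_def sgn_mult[symmetric])
    also have "\<dots> = (sgn (f$x) * \<sigma> x y * sgn (f$y)) * (sgn (f$x) * sgn (f$y))"
      by (simp add: ac_simps)
    finally show "\<sigma> x y = - sgn (f$x) * sgn (f$y)"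
      using edge_sign by simp
  qed
qed

lemma card_quotient_Id_on: "card (A // Id_on A) = card A"
proof -
  have "A // Id_on A = (\<lambda>x. {x}) ` A"
    by (auto simp: quotient_def)
  then show ?thesis
    by (simp add: card_image)
qed

lemma sign_alternating_nodal_counts:
  fixes f :: "real^'n::finite"
  assumes alt: "sign_alternating E \<sigma> f"
  shows "weak_nodal_count E \<sigma> f = CARD('n)" and "strong_nodal_count E \<sigma> f = CARD('n)"
proof -
  have first_edge: "E (ys!0) (ys!1) \<and> f$(ys!0) * \<sigma> (ys!0) (ys!1) * f$(ys!1) < 0"
    if "is_walk E ys" for ys
    using alt that by (auto simp: sign_alternating_def is_walk_def)
  have "\<not> S_walk E \<sigma> f ys" for ys
  proof
    assume "S_walk E \<sigma> f ys"
    then have "is_walk E ys" and "0 < f$(ys!0) * \<sigma> (ys!0) (ys!1) * f$(ys!1)"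
      by (auto simp: S_walk_def is_walk_def)
    then show False
      using first_edge by fastforce
  qed
  moreover have "\<not> W_walk E \<sigma> f ys" for ys
  proof
    assume W: "W_walk E \<sigma> f ys"
    then have "is_walk E ys"
      by (simp add: W_walk_def)
    then have "0 < f$(ys!0) * (\<Prod>k\<in>{0..<1}. \<sigma> (ys!k) (ys!Suc k)) * f$(ys!1)"
      using W[unfolded W_walk_def, THEN conjunct2, rule_format, of 0 1] alt
      by (auto simp: is_walk_def sign_alternating_def)
    then show False
      using first_edge[OF \<open>is_walk E ys\<close>] by simp
  qed
  moreover have "nonzero_set f = UNIV"
    using alt by (auto simp: sign_alternating_def nonzero_set_def)
  ultimately have "strong_rel E \<sigma> f = Id_on UNIV" "weak_rel E \<sigma> f = Id_on UNIV"
    by (auto simp: strong_rel_def weak_rel_def)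
  then show "weak_nodal_count E \<sigma> f = CARD('n)" "strong_nodal_count E \<sigma> f = CARD('n)"
    using \<open>nonzero_set f = UNIV\<close> card_quotient_Id_on[of "UNIV :: 'n set"]
    by (simp_all add: weak_nodal_count_def strong_nodal_count_def)
qed

lemma S_walk_iff:
  "S_walk E \<sigma> f ys \<longleftrightarrow>
    2 \<le> length ys \<and> successively (\<lambda>x y. E x y \<and> 0 < f$x * \<sigma> x y * f$y) ys"
  by (auto simp: S_walk_def is_walk_def successively_conv_nth)

lemma strong_rel_Image_mono:
  assumes "E a b" and "0 < f$a * \<sigma> a b * f$b"
  shows "strong_rel E \<sigma> f `` {b} \<subseteq> strong_rel E \<sigma> f `` {a}"
proof
  fix z assume "z \<in> strong_rel E \<sigma> f `` {b}"
  then have z: "z \<in> nonzero_set f"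
    and "b = z \<or> (\<exists>ys. S_walk E \<sigma> f ys \<and> hd ys = b \<and> last ys = z)"
    by (auto simp: strong_rel_def)
  then have "\<exists>ys. S_walk E \<sigma> f ys \<and> hd ys = a \<and> last ys = z"
  proof (elim disjE exE conjE)
    assume "b = z"
    then show ?thesis
      using assms by (intro exI[of _ "[a, b]"]) (simp add: S_walk_iff)
  next
    fix ys assume "S_walk E \<sigma> f ys" "hd ys = b" "last ys = z"
    then show ?thesis
      using assms by (intro exI[of _ "a # ys"]) (cases ys; simp add: S_walk_iff)
  qed
  moreover have "a \<in> nonzero_set f"
    using assms(2) by (auto simp: nonzero_set_def)
  ultimately show "z \<in> strong_rel E \<sigma> f `` {a}"
    using z by (simp add: strong_rel_def)
qed

text \<open>\<open>n\<close> classes of nonzero vertices force \<open>f\<close> to vanish nowhere and the class map to be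
  injective, whereas an edge with positive product would put its ends into the same class.\<close>
lemma strong_nodal_count_eq_card_imp_sign_alternating:
  fixes f :: "real^'n::finite"
  assumes sg: "signed_graph E \<sigma>" and count: "strong_nodal_count E \<sigma> f = CARD('n)"
  shows "sign_alternating E \<sigma> f"
proof -
  define domain where "domain x = strong_rel E \<sigma> f `` {x}" for x
  have quotient: "nonzero_set f // strong_rel E \<sigma> f = domain ` nonzero_set f"
    unfolding domain_def quotient_def by auto
  then have "CARD('n) \<le> card (nonzero_set f)"
    using count card_image_le[of "nonzero_set f" domain] by (simp add: strong_nodal_count_def)
  then have nonzero: "nonzero_set f = UNIV"
    by (simp add: card_seteq)
  then have "inj domain"
    using count quotient by (simp add: strong_nodal_count_def eq_card_imp_inj_on)
  have "f$x * \<sigma> x y * f$y < 0" if "E x y" for x y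
  proof (rule ccontr)
    assume "\<not> f$x * \<sigma> x y * f$y < 0"
    moreover have "f$x * \<sigma> x y * f$y \<noteq> 0"
      using nonzero signed_graph_abs_sign[OF sg that] by (auto simp: nonzero_set_def)
    ultimately have "0 < f$x * \<sigma> x y * f$y"
      by linarith
    then have "0 < f$x * \<sigma> x y * f$y" and "0 < f$y * \<sigma> y x * f$x"
      using signed_graph_sign_sym[OF sg that] by (simp_all add: ac_simps)
    moreover have "E y x"
      using sg that by (simp add: signed_graph_def)
    ultimately have "domain x = domain y"
      using that strong_rel_Image_mono[of E x y f \<sigma>] strong_rel_Image_mono[of E y x f \<sigma>]
      unfolding domain_def by blast
    moreover have "x \<noteq> y"
      using sg that by (auto simp: signed_graph_def)
    ultimately show False
      using \<open>inj domain\<close> by (auto dest: injD)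
  qed
  then show ?thesis
    using nonzero by (auto simp: sign_alternating_def nonzero_set_def)
qed

lemma eigenspace_subspace:
  fixes M :: "real^'n^'n"
  shows "subspace {v. M *v v = lam *\<^sub>R v}"
  by (auto simp: subspace_def matrix_vector_right_distrib matrix_vector_mult_scaleR
      scaleR_add_right)

lemma dim_eq_1_if_nonzero_coordinate:
  fixes S :: "(real^'n) set"
  assumes "subspace S" and "f \<in> S" and "f \<noteq> 0" and nonzero: "\<And>v. v \<in> S \<Longrightarrow> v \<noteq> 0 \<Longrightarrow> v$x \<noteq> 0"
  shows "dim S = 1"
proof -
  have "v \<in> span {f}" if "v \<in> S" for v
  proof -
    define w where "w = v - (v$x / f$x) *\<^sub>R f"
    have "w \<in> S"
      unfolding w_def using assms(1,2) that by (simp add: subspace_diff subspace_scale)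
    moreover have "w$x = 0"
      unfolding w_def using nonzero[OF assms(2,3)] by simp
    ultimately have "w = 0"
      using nonzero by blast
    then have "v = (v$x / f$x) *\<^sub>R f"
      unfolding w_def by simp
    then show ?thesis
      by (metis span_base span_scale singletonI)
  qed
  moreover have "span {f} \<subseteq> S"
    using assms(1,2) by (simp add: span_minimal)
  ultimately have "S = span {f}"
    by blast
  then show ?thesis
    using assms(3) by simp
qed

lemma simple_eigenvalue_if_eigenfunctions_nowhere_zero:
  fixes M :: "real^'n^'n"
  assumes "is_eigenfunction M lam f" and nowhere_zero: "\<And>v x. is_eigenfunction M lam v \<Longrightarrow> v$x \<noteq> 0"
  shows "simple_eigenvalue M lam"
proof -
  obtain x :: 'n where True
    by blast
  have "dim {v. M *v v = lam *\<^sub>R v} = 1"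
    using assms(1) nowhere_zero[of _ x]
    by (intro dim_eq_1_if_nonzero_coordinate[OF eigenspace_subspace]) (auto simp: is_eigenfunction_def)
  then show ?thesis
    by (simp add: simple_eigenvalue_def)
qed

theorem theorem3p4:
  fixes E :: "'n::finite \<Rightarrow> 'n \<Rightarrow> bool"
    and \<sigma> :: "'n \<Rightarrow> 'n \<Rightarrow> real"
    and M :: "real^'n^'n"
    and lam :: real
    and f :: "real^'n"
  assumes "signed_graph E \<sigma>"
    and "connected_graph E"
    and "transpose M = M"
    and "compatible M E \<sigma>"
    and "largest_eigenvalue M lam"
    and "is_eigenfunction M lam f"
  shows "(antibalanced E \<sigma> \<longleftrightarrow>
            weak_nodal_count E \<sigma> f = CARD('n) \<and> strong_nodal_count E \<sigma> f = CARD('n))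
         \<and> (antibalanced E \<sigma> \<longrightarrow> simple_eigenvalue M lam)"
proof -
  have alternating: "sign_alternating E \<sigma> v" if "antibalanced E \<sigma>" and "is_eigenfunction M lam v" for v
    using antibalanced_top_eigenvector_sign_alternating[OF assms(1-5) that] .
  have "simple_eigenvalue M lam" if "antibalanced E \<sigma>"
    using assms(6) alternating[OF that]
    by (intro simple_eigenvalue_if_eigenfunctions_nowhere_zero) (auto simp: sign_alternating_def)
  moreover have "weak_nodal_count E \<sigma> f = CARD('n) \<and> strong_nodal_count E \<sigma> f = CARD('n)"
    if "antibalanced E \<sigma>"
    using sign_alternating_nodal_counts alternating[OF that assms(6)] by blast
  moreover have "antibalanced E \<sigma>" if "strong_nodal_count E \<sigma> f = CARD('n)"
    using sign_alternating_imp_antibalanced[OF assms(1)]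
      strong_nodal_count_eq_card_imp_sign_alternating[OF assms(1) that] .
  ultimately show ?thesis
    by blast
qed

end
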